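(* Let $\Phi_0$ be a $\mathrm{Spin}(7)$-structure on an oriented $8$-manifold with metric $g$ and Hodge star $*$, and let $v,w$ be vector fields with $|v\wedge w|$ nowhere zero. The solution of \[ \frac{\partial}{\partial t}\Phi_t = w\lrcorner *(v\lrcorner\Phi_t) - v\lrcorner *(w\lrcorner\Phi_t) \] with initial value $\Phi_0$ is \[ \Phi(t) = \Phi_0 + \frac{1-\cos(|v\wedge w|t)}{|v\wedge w|^2}B^2\Phi_0 + \frac{\sin(|v\wedge w|t)}{|v\wedge w|}B\Phi_0, \] where $B\alpha = v\lrcorner(w^\flat\wedge\alpha) - w\lrcorner(v^\flat\wedge\alpha)$. The solution exists for all time and is a closed curve in $\wedge^4$.
   Context: A $\mathrm{Spin}(7)$-structure on an oriented $8$-manifold $M$ is a $4$-form $\Phi$ such that at each point $p$ there are local coordinates $x^0,\dots,x^7$ with $\Phi_p = dx^{0123} - dx^{0167} - dx^{0527} - dx^{0563} + dx^{0415} + dx^{0426} + dx^{0437} + dx^{4567} - dx^{4523} - dx^{4163} - dx^{4127} + dx^{2637} + dx^{1537} + dx^{1526}$. It determines a Riemannian metric $g$ (equal to $\sum_k dx^k\otimes dx^k$ at $p$), orientation and Hodge star $*$. $w^\flat=g(w,\cdot)$, and $|v\wedge w|$ is the norm of the bivector in $g$. *)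

theory Defs
  imports Complex_Main
begin

text \<open>Pointwise model of the tangent space T_pM at a point p, in the coordinates
x^0..x^7 given by the definition of a Spin(7)-structure: there g is the Euclidean
metric sum dx^k (x) dx^k and the orientation is dx^01234567.
A vector is a function nat => real (only indices 0..7 matter).
A form (element of the exterior algebra of T_p^*M) is encoded by its coefficient
function on subsets I of {0..<8}: the coefficient of dx^I, where dx^I is the
wedge of dx^i for i in I in increasing order.  Coefficients at sets not contained
in {0..<8} are irrelevant (all operations below produce 0 there).\<close>

type_synonym form = "nat set \<Rightarrow> real"

definition idx8 :: "nat set" where "idx8 = {0..<8}"

text \<open>sign of shuffling dx^I wedge dx^J into increasing order\<close>
definition sgn_pair :: "nat set \<Rightarrow> nat set \<Rightarrow> real" where
  "sgn_pair I J = (-1) ^ card {(i, j). i \<in> I \<and> j \<in> J \<and> j < i}"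

definition form_add :: "form \<Rightarrow> form \<Rightarrow> form" where
  "form_add \<alpha> \<beta> = (\<lambda>I. \<alpha> I + \<beta> I)"

definition form_diff :: "form \<Rightarrow> form \<Rightarrow> form" where
  "form_diff \<alpha> \<beta> = (\<lambda>I. \<alpha> I - \<beta> I)"

definition form_scale :: "real \<Rightarrow> form \<Rightarrow> form" where
  "form_scale c \<alpha> = (\<lambda>I. c * \<alpha> I)"

definition wedge :: "form \<Rightarrow> form \<Rightarrow> form" where
  "wedge \<alpha> \<beta> = (\<lambda>K. if K \<subseteq> idx8
      then (\<Sum>I\<in>Pow K. sgn_pair I (K - I) * \<alpha> I * \<beta> (K - I)) else 0)"

text \<open>interior product v contracted into the first slot\<close>
definition interior :: "(nat \<Rightarrow> real) \<Rightarrow> form \<Rightarrow> form" where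
  "interior v \<alpha> = (\<lambda>I. if I \<subseteq> idx8
      then (\<Sum>j\<in>idx8 - I. v j * sgn_pair {j} I * \<alpha> (insert j I)) else 0)"

definition hodge :: "form \<Rightarrow> form" where
  "hodge \<alpha> = (\<lambda>J. if J \<subseteq> idx8 then sgn_pair (idx8 - J) J * \<alpha> (idx8 - J) else 0)"

definition dx1 :: "nat \<Rightarrow> form" where
  "dx1 i = (\<lambda>I. if I = {i} \<and> i < 8 then 1 else 0)"

definition form_one :: form where
  "form_one = (\<lambda>I. if I = {} then 1 else 0)"

definition dxl :: "nat list \<Rightarrow> form" where
  "dxl is = foldr (\<lambda>i acc. wedge (dx1 i) acc) is form_one"

definition flat :: "(nat \<Rightarrow> real) \<Rightarrow> form" where
  "flat v = (\<lambda>I. \<Sum>i\<in>idx8. v i * dx1 i I)"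

definition form_norm :: "form \<Rightarrow> real" where
  "form_norm \<alpha> = sqrt (\<Sum>I\<in>Pow idx8. (\<alpha> I)^2)"

definition spin7_form :: form where
  "spin7_form = (\<lambda>I.
       dxl [0,1,2,3] I - dxl [0,1,6,7] I - dxl [0,5,2,7] I - dxl [0,5,6,3] I
     + dxl [0,4,1,5] I + dxl [0,4,2,6] I + dxl [0,4,3,7] I + dxl [4,5,6,7] I
     - dxl [4,5,2,3] I - dxl [4,1,6,3] I - dxl [4,1,2,7] I + dxl [2,6,3,7] I
     + dxl [1,5,3,7] I + dxl [1,5,2,6] I)"

definition flow_rhs :: "(nat \<Rightarrow> real) \<Rightarrow> (nat \<Rightarrow> real) \<Rightarrow> form \<Rightarrow> form" where
  "flow_rhs v w \<alpha> = form_diff (interior w (hodge (interior v \<alpha>)))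
                               (interior v (hodge (interior w \<alpha>)))"

definition opB :: "(nat \<Rightarrow> real) \<Rightarrow> (nat \<Rightarrow> real) \<Rightarrow> form \<Rightarrow> form" where
  "opB v w \<alpha> = form_diff (interior v (wedge (flat w) \<alpha>))
                          (interior w (wedge (flat v) \<alpha>))"

definition biv_norm :: "(nat \<Rightarrow> real) \<Rightarrow> (nat \<Rightarrow> real) \<Rightarrow> real" where
  "biv_norm v w = form_norm (wedge (flat v) (flat w))"

end

theory Submission
  imports Defs "HOL-Library.Function_Algebras"
begin

text \<open>On 4-forms the Hodge star turns interior products into wedge products,
  \<open>*(v \<lrcorner> \<alpha>) = - v\<^sup>\<flat> \<and> *\<alpha>\<close>; hence there the flow is \<open>\<alpha> \<mapsto> B(*\<alpha>)\<close> and \<open>B\<close> commutes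
  with \<open>*\<close>. As \<open>\<Phi>\<^sub>0\<close> is self-dual, so are \<open>B\<Phi>\<^sub>0\<close> and \<open>B\<^sup>2\<Phi>\<^sub>0\<close>, and the flow acts on all three
  as \<open>B\<close>. The anticommutation relations \<open>v \<lrcorner> (a\<^sup>\<flat> \<and> \<alpha>) + a\<^sup>\<flat> \<and> (v \<lrcorner> \<alpha>) = g(v,a) \<alpha>\<close>
  give \<open>B\<^sup>3 = -|v \<and> w|\<^sup>2 B\<close>, so on the span of \<open>\<Phi>\<^sub>0, B\<Phi>\<^sub>0, B\<^sup>2\<Phi>\<^sub>0\<close> the flow is a harmonic
  oscillator of frequency \<open>|v \<and> w|\<close>: the stated curve solves it and has period \<open>2\<pi> / |v \<and> w|\<close>.
  The flow is linear with bounded coefficients, so Gronwall's inequality for the squared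
  distance of two solutions gives uniqueness.\<close>

section \<open>Signs\<close>

text \<open>\<open>dx\<^sup>j \<and> dx\<^sup>I = insert_sign j I \<cdot> dx\<^bsup>insert j I\<^esup>\<close> for \<open>j \<notin> I\<close>.\<close>

definition insert_sign :: "nat \<Rightarrow> nat set \<Rightarrow> real" where
  "insert_sign j I = (-1) ^ card {i \<in> I. i < j}"

lemma abs_insert_sign [simp]: "\<bar>insert_sign j I\<bar> = 1"
  by (simp add: insert_sign_def)

lemma insert_sign_square [simp]: "insert_sign j I * insert_sign j I = 1"
  by (simp add: insert_sign_def flip: power_add)

lemma insert_sign_square_left [simp]: "insert_sign j I * (insert_sign j I * x) = x"
  by (simp flip: mult.assoc)

lemma sgn_pair_singleton: "sgn_pair {j} I = insert_sign j I"
proof -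
  have "{(i, k). i \<in> {j} \<and> k \<in> I \<and> k < i} = Pair j ` {i \<in> I. i < j}"
    by auto
  then show ?thesis
    by (simp add: sgn_pair_def insert_sign_def card_image inj_on_def)
qed

lemma insert_sign_insert:
  assumes "finite I" and "k \<notin> I"
  shows "insert_sign j (insert k I) = (if k < j then - insert_sign j I else insert_sign j I)"
proof -
  have "{i \<in> insert k I. i < j} = (if k < j then insert k {i \<in> I. i < j} else {i \<in> I. i < j})"
    by auto
  then show ?thesis
    using assms by (simp add: insert_sign_def)
qed

lemma insert_sign_exchange:
  assumes "finite I" and "i \<in> I" and "j \<notin> I"
  shows "insert_sign j I * insert_sign i (insert j (I - {i}))
       = - insert_sign i (I - {i}) * insert_sign j (I - {i})"
proof -
  have "insert_sign j I = (if i < j then - insert_sign j (I - {i}) else insert_sign j (I - {i}))"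
    using insert_sign_insert[of "I - {i}" i j] assms by (simp add: insert_absorb)
  moreover have "insert_sign i (insert j (I - {i}))
      = (if j < i then - insert_sign i (I - {i}) else insert_sign i (I - {i}))"
    using insert_sign_insert[of "I - {i}" j i] assms by simp
  moreover have "i \<noteq> j"
    using assms by auto
  ultimately show ?thesis
    by (cases "i < j") auto
qed

lemma insert_sign_swap:
  assumes "finite I" and "j \<notin> I" and "k \<notin> I" and "j \<noteq> k"
  shows "insert_sign k (insert j I) * insert_sign j I = - (insert_sign j (insert k I) * insert_sign k I)"
  using assms by (cases "j < k") (auto simp: insert_sign_insert)

lemma sgn_pair_insert_left:
  assumes "finite A" and "finite C" and "k \<notin> A"
  shows "sgn_pair (insert k A) C = sgn_pair A C * insert_sign k C"
proof -
  let ?S = "{(i, j). i \<in> A \<and> j \<in> C \<and> j < i}"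
  let ?T = "Pair k ` {c \<in> C. c < k}"
  have split: "{(i, j). i \<in> insert k A \<and> j \<in> C \<and> j < i} = ?S \<union> ?T"
    by auto
  have "finite ?S"
    by (rule finite_subset[of _ "A \<times> C"]) (use assms in auto)
  moreover have "?S \<inter> ?T = {}"
    using assms(3) by auto
  moreover have "card ?T = card {c \<in> C. c < k}"
    by (rule card_image) (auto simp: inj_on_def)
  ultimately show ?thesis
    unfolding sgn_pair_def insert_sign_def split using assms(2)
    by (simp add: card_Un_disjoint power_add)
qed

lemma sgn_pair_insert_right:
  assumes "finite A" and "finite C" and "k \<notin> A" and "k \<notin> C"
  shows "sgn_pair A (insert k C) = (-1) ^ card A * sgn_pair A C * insert_sign k A"
proof -
  let ?S = "{(i, j). i \<in> A \<and> j \<in> C \<and> j < i}"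
  let ?G = "{a \<in> A. k < a}"
  let ?T = "(\<lambda>a. (a, k)) ` ?G"
  have split: "{(i, j). i \<in> A \<and> j \<in> insert k C \<and> j < i} = ?S \<union> ?T"
    by auto
  have "finite ?S"
    by (rule finite_subset[of _ "A \<times> C"]) (use assms in auto)
  moreover have "?S \<inter> ?T = {}"
    using assms(4) by auto
  moreover have "card ?T = card ?G"
    by (rule card_image) (auto simp: inj_on_def)
  ultimately have count: "sgn_pair A (insert k C) = sgn_pair A C * (-1) ^ card ?G"
    unfolding sgn_pair_def split using assms(1) by (simp add: card_Un_disjoint power_add)
  have "card A = card {a \<in> A. a < k} + card ?G"
  proof -
    have "A = {a \<in> A. a < k} \<union> ?G"
      using assms(3) nat_neq_iff by auto
    then show ?thesis
      using assms(1) by (metis (no_types, lifting) card_Un_disjoint disjoint_iff finite_Un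
          less_asym mem_Collect_eq)
  qed
  then have "(-1) ^ card ?G = (-1) ^ card A * insert_sign k A"
    by (simp add: insert_sign_def power_add left_minus_one_mult_self mult_ac)
  with count show ?thesis
    by simp
qed

lemma sgn_pair_move_left:
  assumes "finite C" and "finite D" and "j \<notin> C" and "j \<notin> D"
  shows "sgn_pair C (insert j D) * insert_sign j C
       = (-1) ^ card C * insert_sign j D * sgn_pair (insert j C) D"
  using assms by (simp add: sgn_pair_insert_left sgn_pair_insert_right mult_ac)

lemma sgn_pair_move_right:
  assumes "finite A" and "finite J" and "j \<notin> A" and "j \<notin> J"
  shows "sgn_pair (insert j A) J * insert_sign j A
       = (-1) ^ card A * insert_sign j J * sgn_pair A (insert j J)"
  using assms by (simp add: sgn_pair_insert_left sgn_pair_insert_right left_minus_one_mult_self mult_ac)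

section \<open>Exterior algebra in coordinates\<close>

lemma finite_idx8 [simp]: "finite idx8"
  by (simp add: idx8_def)

lemma card_idx8 [simp]: "card idx8 = 8"
  by (simp add: idx8_def)

lemma idx8_eq: "idx8 = {0, 1, 2, 3, 4, 5, 6, 7}"
  by (auto simp: idx8_def)

lemma finite_subset_idx8: "I \<subseteq> idx8 \<Longrightarrow> finite I"
  using finite_subset finite_idx8 by blast

lemma flat_singleton: "k \<in> idx8 \<Longrightarrow> flat a {k} = a k"
  by (simp add: flat_def dx1_def idx8_def if_distrib cong: if_cong)

lemma flat_non_singleton: "(\<And>k. J \<noteq> {k}) \<Longrightarrow> flat a J = 0"
  by (simp add: flat_def dx1_def)

lemma wedge_flat:
  "wedge (flat a) \<alpha> K =
     (if K \<subseteq> idx8 then \<Sum>i\<in>K. a i * insert_sign i (K - {i}) * \<alpha> (K - {i}) else 0)"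
proof (cases "K \<subseteq> idx8")
  case True
  have "(\<Sum>I\<in>Pow K. sgn_pair I (K - I) * flat a I * \<alpha> (K - I))
      = (\<Sum>I\<in>(\<lambda>i. {i}) ` K. sgn_pair I (K - I) * flat a I * \<alpha> (K - I))"
    by (rule sum.mono_neutral_right)
      (use True in \<open>auto simp: finite_subset_idx8 intro!: flat_non_singleton\<close>)
  also have "\<dots> = (\<Sum>i\<in>K. a i * insert_sign i (K - {i}) * \<alpha> (K - {i}))"
    using True by (auto simp: sum.reindex sgn_pair_singleton flat_singleton intro!: sum.cong)
  finally show ?thesis
    using True by (simp add: wedge_def)
qed (simp add: wedge_def)

lemma interior_eq:
  "interior v \<alpha> I =
     (if I \<subseteq> idx8 then \<Sum>j\<in>idx8 - I. v j * insert_sign j I * \<alpha> (insert j I) else 0)"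
  by (simp add: interior_def sgn_pair_singleton)

text \<open>Forms are a commutative ring under the pointwise operations of \<open>Function_Algebras\<close>.
  Only products with constant forms are ever used: \<open>const_form c * \<alpha>\<close> is the scalar multiple
  \<open>c \<alpha>\<close>, and ring normalisation does the linear algebra.\<close>

definition const_form :: "real \<Rightarrow> form" where
  "const_form c = (\<lambda>_. c)"

lemma const_form_apply [simp]: "const_form c I = c"
  by (simp add: const_form_def)

lemma const_form_arith:
  "const_form (a * b) = const_form a * const_form b"
  "const_form (a - b) = const_form a - const_form b"
  by (simp_all add: fun_eq_iff)

lemma form_ops:
  "form_add \<alpha> \<beta> = \<alpha> + \<beta>" "form_diff \<alpha> \<beta> = \<alpha> - \<beta>" "form_scale c \<alpha> = const_form c * \<alpha>"
  by (simp_all add: fun_eq_iff form_add_def form_diff_def form_scale_def)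

definition form_linear :: "(form \<Rightarrow> form) \<Rightarrow> bool" where
  "form_linear L \<longleftrightarrow>
     (\<forall>\<alpha> \<beta>. L (\<alpha> + \<beta>) = L \<alpha> + L \<beta>) \<and> (\<forall>c \<alpha>. L (const_form c * \<alpha>) = const_form c * L \<alpha>)"

lemma form_linearI:
  assumes "\<And>\<alpha> \<beta> I. L (\<alpha> + \<beta>) I = L \<alpha> I + L \<beta> I"
    and "\<And>c \<alpha> I. L (const_form c * \<alpha>) I = c * L \<alpha> I"
  shows "form_linear L"
  using assms by (simp add: form_linear_def fun_eq_iff)

lemma form_linear_simps:
  assumes "form_linear L"
  shows "L (\<alpha> + \<beta>) = L \<alpha> + L \<beta>"
    and "L (const_form c * \<alpha>) = const_form c * L \<alpha>"
    and "L (numeral n * \<alpha>) = numeral n * L \<alpha>"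
    and "L (- \<alpha>) = - L \<alpha>"
    and "L (\<alpha> - \<beta>) = L \<alpha> - L \<beta>"
    and "L 0 = 0"
proof -
  have add: "L (\<alpha> + \<beta>) = L \<alpha> + L \<beta>" and scale: "L (const_form c * \<alpha>) = const_form c * L \<alpha>"
    for \<alpha> \<beta> c
    using assms by (simp_all add: form_linear_def)
  have "- \<gamma> = const_form (- 1) * \<gamma>" for \<gamma>
    by (simp add: fun_eq_iff)
  then have neg: "L (- \<gamma>) = - L \<gamma>" for \<gamma>
    by (metis scale)
  then show "L (- \<alpha>) = - L \<alpha>" and "L (\<alpha> - \<beta>) = L \<alpha> - L \<beta>"
    by (metis add diff_conv_add_uminus)+
  have "numeral n = const_form (numeral n)"
    by (simp add: fun_eq_iff numeral_fun)
  then show "L (numeral n * \<alpha>) = numeral n * L \<alpha>"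
    by (metis scale)
  show "L (\<alpha> + \<beta>) = L \<alpha> + L \<beta>" "L (const_form c * \<alpha>) = const_form c * L \<alpha>"
    by (fact add scale)+
  have "const_form 0 * \<gamma> = 0" for \<gamma>
    by (simp add: fun_eq_iff)
  then show "L 0 = 0"
    by (metis scale)
qed

lemma form_linear_interior: "form_linear (interior v)"
  by (rule form_linearI) (simp_all add: interior_def sum.distrib distrib_left sum_distrib_left mult_ac)

lemma form_linear_wedge_flat: "form_linear (wedge (flat a))"
  by (rule form_linearI) (simp_all add: wedge_flat sum.distrib distrib_left sum_distrib_left mult_ac)

lemma form_linear_hodge: "form_linear hodge"
  by (rule form_linearI) (simp_all add: hodge_def distrib_left mult_ac)

definition restrict_idx8 :: "form \<Rightarrow> form" where
  "restrict_idx8 \<alpha> = (\<lambda>I. if I \<subseteq> idx8 then \<alpha> I else 0)"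

lemma form_linear_restrict_idx8: "form_linear restrict_idx8"
  by (rule form_linearI) (simp_all add: restrict_idx8_def)

lemma restrict_idx8_simps:
  "restrict_idx8 (interior v \<alpha>) = interior v \<alpha>"
  "restrict_idx8 (wedge (flat a) \<alpha>) = wedge (flat a) \<alpha>"
  "restrict_idx8 (hodge \<alpha>) = hodge \<alpha>"
  "interior v (restrict_idx8 \<alpha>) = interior v \<alpha>"
  "wedge (flat a) (restrict_idx8 \<alpha>) = wedge (flat a) \<alpha>"
  by (auto simp: fun_eq_iff restrict_idx8_def interior_def wedge_flat hodge_def intro!: sum.cong)

lemmas exterior_linear_simps =
  form_linear_simps[OF form_linear_interior] form_linear_simps[OF form_linear_wedge_flat]
  form_linear_simps[OF form_linear_hodge] form_linear_simps[OF form_linear_restrict_idx8]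

definition inner8 :: "(nat \<Rightarrow> real) \<Rightarrow> (nat \<Rightarrow> real) \<Rightarrow> real" where
  "inner8 v a = (\<Sum>j\<in>idx8. v j * a j)"

lemma interior_wedge_flat_expand:
  assumes "I \<subseteq> idx8"
  shows "interior v (wedge (flat a) \<alpha>) I =
     (\<Sum>j\<in>idx8 - I. v j * a j) * \<alpha> I +
     (\<Sum>j\<in>idx8 - I. \<Sum>i\<in>I. v j * a i * (insert_sign j I * insert_sign i (insert j (I - {i})))
        * \<alpha> (insert j (I - {i})))"
proof -
  have "v j * insert_sign j I * wedge (flat a) \<alpha> (insert j I) = v j * a j * \<alpha> I +
     (\<Sum>i\<in>I. v j * a i * (insert_sign j I * insert_sign i (insert j (I - {i})))
        * \<alpha> (insert j (I - {i})))"
    if j: "j \<in> idx8 - I" for j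
  proof -
    have "insert j I - {i} = insert j (I - {i})" if "i \<in> I" for i
      using that j by auto
    then have "wedge (flat a) \<alpha> (insert j I) = a j * insert_sign j I * \<alpha> I +
        (\<Sum>i\<in>I. a i * insert_sign i (insert j (I - {i})) * \<alpha> (insert j (I - {i})))"
      using assms j by (simp add: wedge_flat finite_subset_idx8 insert_Diff_if cong: sum.cong)
    then show ?thesis
      by (simp add: algebra_simps sum_distrib_left)
  qed
  then show ?thesis
    using assms by (simp add: interior_eq sum.distrib sum_distrib_right)
qed

lemma wedge_flat_interior_expand:
  assumes "I \<subseteq> idx8"
  shows "wedge (flat a) (interior v \<alpha>) I =
     (\<Sum>i\<in>I. v i * a i) * \<alpha> I +
     (\<Sum>j\<in>idx8 - I. \<Sum>i\<in>I. v j * a i * (insert_sign i (I - {i}) * insert_sign j (I - {i}))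
        * \<alpha> (insert j (I - {i})))"
proof -
  have "a i * insert_sign i (I - {i}) * interior v \<alpha> (I - {i}) = v i * a i * \<alpha> I +
     (\<Sum>j\<in>idx8 - I. v j * a i * (insert_sign i (I - {i}) * insert_sign j (I - {i}))
        * \<alpha> (insert j (I - {i})))"
    if i: "i \<in> I" for i
  proof -
    have "idx8 - (I - {i}) = insert i (idx8 - I)" and "insert i (I - {i}) = I"
      and "I - {i} \<subseteq> idx8"
      using assms i by auto
    then have "interior v \<alpha> (I - {i}) = v i * insert_sign i (I - {i}) * \<alpha> I +
        (\<Sum>j\<in>idx8 - I. v j * insert_sign j (I - {i}) * \<alpha> (insert j (I - {i})))"
      using assms i by (simp add: interior_eq)
    then show ?thesis
      by (simp add: algebra_simps sum_distrib_left)
  qed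
  then show ?thesis
    using assms by (simp add: wedge_flat sum.distrib sum_distrib_right sum.swap[of _ I])
qed

lemma interior_wedge_flat:
  "interior v (wedge (flat a) \<alpha>)
     = const_form (inner8 v a) * restrict_idx8 \<alpha> - wedge (flat a) (interior v \<alpha>)"
proof (rule ext)
  fix I
  show "interior v (wedge (flat a) \<alpha>) I
     = (const_form (inner8 v a) * restrict_idx8 \<alpha> - wedge (flat a) (interior v \<alpha>)) I"
  proof (cases "I \<subseteq> idx8")
    case True
    have diagonal: "(\<Sum>j\<in>idx8 - I. v j * a j) + (\<Sum>i\<in>I. v i * a i) = inner8 v a"
      using True by (simp add: inner8_def sum.subset_diff[of I idx8])
    have "(\<Sum>j\<in>idx8 - I. \<Sum>i\<in>I. v j * a i * (insert_sign j I * insert_sign i (insert j (I - {i})))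
        * \<alpha> (insert j (I - {i})))
      = - (\<Sum>j\<in>idx8 - I. \<Sum>i\<in>I. v j * a i * (insert_sign i (I - {i}) * insert_sign j (I - {i}))
        * \<alpha> (insert j (I - {i})))"
      using True insert_sign_exchange[of I] by (simp add: finite_subset_idx8 flip: sum_negf)
    then have "interior v (wedge (flat a) \<alpha>) I + wedge (flat a) (interior v \<alpha>) I = inner8 v a * \<alpha> I"
      using True by (simp add: interior_wedge_flat_expand wedge_flat_interior_expand
          flip: diagonal distrib_right)
    then show ?thesis
      using True by (simp add: restrict_idx8_def eq_diff_eq)
  qed (simp add: interior_eq wedge_flat restrict_idx8_def)
qed

lemma interior_interior_expand:
  assumes "I \<subseteq> idx8"
  shows "interior v (interior w \<alpha>) I =
     (\<Sum>j\<in>idx8 - I. \<Sum>k\<in>{k \<in> idx8 - I. j \<noteq> k}.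
        v j * w k * (insert_sign k (insert j I) * insert_sign j I) * \<alpha> (insert k (insert j I)))"
proof -
  have "idx8 - insert j I = {k \<in> idx8 - I. j \<noteq> k}" for j
    by auto
  then show ?thesis
    using assms by (simp add: interior_eq sum_distrib_left mult_ac)
qed

lemma interior_anticomm: "interior v (interior w \<alpha>) = - interior w (interior v \<alpha>)"
proof (rule ext)
  fix I
  show "interior v (interior w \<alpha>) I = (- interior w (interior v \<alpha>)) I"
  proof (cases "I \<subseteq> idx8")
    case True
    let ?U = "idx8 - I"
    have "interior w (interior v \<alpha>) I = (\<Sum>j\<in>?U. \<Sum>k\<in>{k \<in> ?U. j \<noteq> k}.
        w j * v k * (insert_sign k (insert j I) * insert_sign j I) * \<alpha> (insert k (insert j I)))"
      using True by (rule interior_interior_expand)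
    also have "\<dots> = (\<Sum>k\<in>?U. \<Sum>j\<in>{j \<in> ?U. j \<noteq> k}.
        w j * v k * (insert_sign k (insert j I) * insert_sign j I) * \<alpha> (insert k (insert j I)))"
      by (rule sum.swap_restrict) simp_all
    also have "\<dots> = (\<Sum>k\<in>?U. \<Sum>j\<in>{j \<in> ?U. k \<noteq> j}.
        - (v k * w j * (insert_sign j (insert k I) * insert_sign k I) * \<alpha> (insert j (insert k I))))"
    proof (intro sum.cong)
      fix k j assume "k \<in> ?U" "j \<in> {j \<in> ?U. k \<noteq> j}"
      then show "w j * v k * (insert_sign k (insert j I) * insert_sign j I) * \<alpha> (insert k (insert j I))
        = - (v k * w j * (insert_sign j (insert k I) * insert_sign k I) * \<alpha> (insert j (insert k I)))"
        using insert_sign_swap[of I j k] True by (simp add: finite_subset_idx8 insert_commute)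
    qed auto
    also have "\<dots> = - interior v (interior w \<alpha>) I"
      using True by (simp add: interior_interior_expand sum_negf)
    finally show ?thesis
      by simp
  qed (simp add: interior_eq)
qed

lemma wedge_wedge_flat_expand:
  assumes "K \<subseteq> idx8"
  shows "wedge (flat a) (wedge (flat b) \<alpha>) K =
     (\<Sum>i\<in>K. \<Sum>j\<in>{j \<in> K. i \<noteq> j}.
        a i * b j * (insert_sign i (K - {i}) * insert_sign j (K - {i} - {j})) * \<alpha> (K - {i} - {j}))"
proof -
  have "K - {i} = {j \<in> K. i \<noteq> j}" for i
    by auto
  then show ?thesis
    using assms by (auto simp: wedge_flat sum_distrib_left mult_ac intro!: sum.cong)
qed

lemma wedge_flat_anticomm: "wedge (flat a) (wedge (flat b) \<alpha>) = - wedge (flat b) (wedge (flat a) \<alpha>)"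
proof (rule ext)
  fix K
  show "wedge (flat a) (wedge (flat b) \<alpha>) K = (- wedge (flat b) (wedge (flat a) \<alpha>)) K"
  proof (cases "K \<subseteq> idx8")
    case True
    have "wedge (flat b) (wedge (flat a) \<alpha>) K = (\<Sum>j\<in>K. \<Sum>i\<in>{i \<in> K. j \<noteq> i}.
        b j * a i * (insert_sign j (K - {j}) * insert_sign i (K - {j} - {i})) * \<alpha> (K - {j} - {i}))"
      using True by (rule wedge_wedge_flat_expand)
    also have "\<dots> = (\<Sum>i\<in>K. \<Sum>j\<in>{j \<in> K. j \<noteq> i}.
        b j * a i * (insert_sign j (K - {j}) * insert_sign i (K - {j} - {i})) * \<alpha> (K - {j} - {i}))"
      by (rule sum.swap_restrict) (simp_all add: finite_subset_idx8 True)
    also have "\<dots> = (\<Sum>i\<in>K. \<Sum>j\<in>{j \<in> K. i \<noteq> j}.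
        - (a i * b j * (insert_sign i (K - {i}) * insert_sign j (K - {i} - {j})) * \<alpha> (K - {i} - {j})))"
    proof (intro sum.cong)
      fix i j assume "i \<in> K" "j \<in> {j \<in> K. i \<noteq> j}"
      moreover define R where "R = K - {i} - {j}"
      ultimately have "K - {i} = insert j R" "K - {j} = insert i R" "K - {j} - {i} = R"
        "finite R" "i \<notin> R" "j \<notin> R" "i \<noteq> j"
        using True by (auto simp: finite_subset_idx8)
      then show "b j * a i * (insert_sign j (K - {j}) * insert_sign i (K - {j} - {i})) * \<alpha> (K - {j} - {i})
        = - (a i * b j * (insert_sign i (K - {i}) * insert_sign j (K - {i} - {j})) * \<alpha> (K - {i} - {j}))"
        using insert_sign_swap[of R j i] by (simp add: R_def[symmetric])
    qed auto
    also have "\<dots> = - wedge (flat a) (wedge (flat b) \<alpha>) K"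
      using True by (simp add: wedge_wedge_flat_expand sum_negf)
    finally show ?thesis
      by simp
  qed (simp add: wedge_flat)
qed

lemma interior_interior_self: "interior v (interior v \<alpha>) = 0"
  using interior_anticomm[of v v \<alpha>] by (simp add: fun_eq_iff)

lemma wedge_flat_wedge_flat_self: "wedge (flat a) (wedge (flat a) \<alpha>) = 0"
  using wedge_flat_anticomm[of a a \<alpha>] by (simp add: fun_eq_iff)

section \<open>The Hodge star and the operator \<open>B\<close>\<close>

definition homogeneous :: "nat \<Rightarrow> form \<Rightarrow> bool" where
  "homogeneous k \<alpha> \<longleftrightarrow> (\<forall>I. \<alpha> I \<noteq> 0 \<longrightarrow> I \<subseteq> idx8 \<and> card I = k)"

lemma homogeneous_interior:
  assumes "homogeneous (Suc k) \<alpha>"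
  shows "homogeneous k (interior v \<alpha>)"
  unfolding homogeneous_def
proof (intro allI impI)
  fix I
  assume nonzero: "interior v \<alpha> I \<noteq> 0"
  then have I: "I \<subseteq> idx8"
    by (auto simp: interior_eq split: if_splits)
  with nonzero obtain j where j: "j \<in> idx8 - I" and "v j * insert_sign j I * \<alpha> (insert j I) \<noteq> 0"
    by (auto simp: interior_eq intro: sum.not_neutral_contains_not_neutral)
  then have "card (insert j I) = Suc k"
    using assms by (auto simp: homogeneous_def)
  with I j show "I \<subseteq> idx8 \<and> card I = k"
    by (simp add: finite_subset_idx8)
qed

lemma homogeneous_wedge_flat:
  assumes "homogeneous k \<alpha>"
  shows "homogeneous (Suc k) (wedge (flat a) \<alpha>)"
  unfolding homogeneous_def
proof (intro allI impI)
  fix K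
  assume nonzero: "wedge (flat a) \<alpha> K \<noteq> 0"
  then have K: "K \<subseteq> idx8"
    by (auto simp: wedge_flat split: if_splits)
  with nonzero obtain i where i: "i \<in> K" and "a i * insert_sign i (K - {i}) * \<alpha> (K - {i}) \<noteq> 0"
    by (auto simp: wedge_flat intro: sum.not_neutral_contains_not_neutral)
  then have "card (K - {i}) = k"
    using assms by (auto simp: homogeneous_def)
  with K i show "K \<subseteq> idx8 \<and> card K = Suc k"
    by (metis card_Suc_Diff1 finite_subset_idx8)
qed

lemma homogeneous_diff: "homogeneous k \<alpha> \<Longrightarrow> homogeneous k \<beta> \<Longrightarrow> homogeneous k (\<alpha> - \<beta>)"
  unfolding homogeneous_def by (metis diff_zero minus_apply zero_diff)

lemma hodge_interior:
  assumes "homogeneous k \<alpha>"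
  shows "hodge (interior v \<alpha>) J = (-1) ^ (k - 1) * wedge (flat v) (hodge \<alpha>) J"
proof (cases "J \<subseteq> idx8")
  case True
  define C where "C = idx8 - J"
  have C: "finite C" "idx8 - C = J" "C \<subseteq> idx8"
    using True by (auto simp: C_def)
  have summand: "sgn_pair C J * (insert_sign j C * \<alpha> (insert j C))
      = (-1) ^ (k - 1) * (insert_sign j (J - {j}) * (sgn_pair (insert j C) (J - {j}) * \<alpha> (insert j C)))"
    if j: "j \<in> J" for j
  proof (cases "\<alpha> (insert j C) = 0")
    case False
    have "j \<notin> C"
      using j by (simp add: C_def)
    moreover from this have "card C = k - 1"
      using False assms C by (auto simp: homogeneous_def)
    ultimately have "sgn_pair C J * insert_sign j C
        = (-1) ^ (k - 1) * insert_sign j (J - {j}) * sgn_pair (insert j C) (J - {j})"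
      using sgn_pair_move_left[of C "J - {j}" j] C j True by (simp add: finite_subset_idx8 insert_absorb)
    then show ?thesis
      by (simp flip: mult.assoc)
  qed simp
  have "hodge (interior v \<alpha>) J = (\<Sum>j\<in>J. v j * (sgn_pair C J * (insert_sign j C * \<alpha> (insert j C))))"
    using True C by (simp add: hodge_def interior_eq C_def[symmetric] sum_distrib_left mult_ac)
  also have "\<dots> = (\<Sum>j\<in>J. v j * ((-1) ^ (k - 1)
      * (insert_sign j (J - {j}) * (sgn_pair (insert j C) (J - {j}) * \<alpha> (insert j C)))))"
    by (simp add: summand)
  also have "\<dots> = (-1) ^ (k - 1) * wedge (flat v) (hodge \<alpha>) J"
  proof -
    have "idx8 - (J - {j}) = insert j C" if "j \<in> J" for j
      using True that by (auto simp: C_def)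
    then show ?thesis
      using True by (auto simp: wedge_flat hodge_def sum_distrib_left mult_ac intro!: sum.cong)
  qed
  finally show ?thesis .
qed (simp add: hodge_def wedge_flat)

lemma hodge_wedge_flat:
  assumes "homogeneous k \<beta>"
  shows "hodge (wedge (flat v) \<beta>) J = (-1) ^ k * interior v (hodge \<beta>) J"
proof (cases "J \<subseteq> idx8")
  case True
  define C where "C = idx8 - J"
  have C: "finite C" "idx8 - C = J" "C \<subseteq> idx8"
    using True by (auto simp: C_def)
  have summand: "sgn_pair C J * (insert_sign j (C - {j}) * \<beta> (C - {j}))
      = (-1) ^ k * (insert_sign j J * (sgn_pair (C - {j}) (insert j J) * \<beta> (C - {j})))"
    if j: "j \<in> C" for j
  proof (cases "\<beta> (C - {j}) = 0")
    case False
    then have "card (C - {j}) = k"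
      using assms by (auto simp: homogeneous_def)
    moreover have "j \<notin> J"
      using j by (simp add: C_def)
    ultimately have "sgn_pair C J * insert_sign j (C - {j})
        = (-1) ^ k * insert_sign j J * sgn_pair (C - {j}) (insert j J)"
      using sgn_pair_move_right[of "C - {j}" J j] C j True by (simp add: finite_subset_idx8 insert_absorb)
    then show ?thesis
      by (simp flip: mult.assoc)
  qed simp
  have "hodge (wedge (flat v) \<beta>) J = (\<Sum>j\<in>C. v j * (sgn_pair C J * (insert_sign j (C - {j}) * \<beta> (C - {j}))))"
    using True C by (simp add: hodge_def wedge_flat C_def[symmetric] sum_distrib_left mult_ac)
  also have "\<dots> = (\<Sum>j\<in>C. v j * ((-1) ^ k
      * (insert_sign j J * (sgn_pair (C - {j}) (insert j J) * \<beta> (C - {j})))))"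
    by (simp add: summand)
  also have "\<dots> = (-1) ^ k * interior v (hodge \<beta>) J"
  proof -
    have "idx8 - insert j J = C - {j}" and "insert j J \<subseteq> idx8" if "j \<in> C" for j
      using True that by (auto simp: C_def)
    then show ?thesis
      using True by (auto simp: interior_eq hodge_def C_def[symmetric] sum_distrib_left mult_ac
          intro!: sum.cong)
  qed
  finally show ?thesis .
qed (simp add: hodge_def interior_eq)

lemma hodge_interior_degree4:
  "homogeneous 4 \<alpha> \<Longrightarrow> hodge (interior v \<alpha>) = - wedge (flat v) (hodge \<alpha>)"
  by (simp add: fun_eq_iff hodge_interior[of 4])

lemma hodge_wedge_flat_degree3:
  "homogeneous 3 \<beta> \<Longrightarrow> hodge (wedge (flat v) \<beta>) = - interior v (hodge \<beta>)"
  by (simp add: fun_eq_iff hodge_wedge_flat[of 3])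

lemma inner8_commute: "inner8 v w = inner8 w v"
  by (simp add: inner8_def mult.commute)

lemma opB_eq: "opB v w \<alpha> = wedge (flat v) (interior w \<alpha>) - wedge (flat w) (interior v \<alpha>)"
  by (simp add: opB_def form_ops interior_wedge_flat inner8_commute[of w v])

lemma opB_cube:
  "opB v w (opB v w (opB v w \<alpha>))
     = - const_form (inner8 v v * inner8 w w - (inner8 v w)\<^sup>2) * opB v w \<alpha>"
  \<comment> \<open>normal-order each monomial by the anticommutation relations, wedges left of interiors\<close>
  unfolding opB_eq
  by (simp add: exterior_linear_simps restrict_idx8_simps interior_wedge_flat interior_interior_self
      wedge_flat_wedge_flat_self wedge_flat_anticomm[of w v] interior_anticomm[of v w]
      inner8_commute[of w v])
    (simp add: algebra_simps power2_eq_square const_form_arith)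

lemma flow_rhs_degree4: "homogeneous 4 \<alpha> \<Longrightarrow> flow_rhs v w \<alpha> = opB v w (hodge \<alpha>)"
  by (simp add: flow_rhs_def opB_def form_ops hodge_interior_degree4 exterior_linear_simps)

lemma homogeneous_opB: "homogeneous (Suc k) \<alpha> \<Longrightarrow> homogeneous (Suc k) (opB v w \<alpha>)"
  unfolding opB_eq by (intro homogeneous_diff homogeneous_wedge_flat homogeneous_interior)

lemma hodge_opB:
  assumes "homogeneous 4 \<alpha>"
  shows "hodge (opB v w \<alpha>) = opB v w (hodge \<alpha>)"
proof -
  have "homogeneous 3 (interior u \<alpha>)" for u
    using assms homogeneous_interior[of 3] by simp
  then show ?thesis
    unfolding opB_eq[of v w \<alpha>] using assms
    by (simp add: opB_def form_ops exterior_linear_simps hodge_wedge_flat_degree3 hodge_interior_degree4)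
qed

section \<open>Self-duality of \<open>\<Phi>\<^sub>0\<close>\<close>

fun sort_sign :: "nat list \<Rightarrow> real" where
  "sort_sign [] = 1"
| "sort_sign (i # l) = (-1) ^ length (filter (\<lambda>x. x < i) l) * sort_sign l"

lemma insert_sign_set:
  "distinct l \<Longrightarrow> insert_sign i (set l) = (-1) ^ length (filter (\<lambda>x. x < i) l)"
  by (simp add: insert_sign_def distinct_card[symmetric] flip: set_filter)

lemma wedge_dx1:
  assumes "i \<in> idx8"
  shows "wedge (dx1 i) \<beta> K =
    (if K \<subseteq> idx8 \<and> i \<in> K then insert_sign i (K - {i}) * \<beta> (K - {i}) else 0)"
proof -
  have "flat (\<lambda>j. if j = i then 1 else 0) J = (\<Sum>j\<in>idx8. if j = i then dx1 i J else 0)" for J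
    unfolding flat_def by (rule sum.cong) auto
  then have dx1_eq: "dx1 i = flat (\<lambda>j. if j = i then 1 else 0)"
    using assms by (simp add: fun_eq_iff)
  have "(\<Sum>j\<in>K. (if j = i then 1 else 0) * insert_sign j (K - {j}) * \<beta> (K - {j}))
      = (\<Sum>j\<in>K. if j = i then insert_sign i (K - {i}) * \<beta> (K - {i}) else 0)"
    by (rule sum.cong) auto
  then show ?thesis
    unfolding dx1_eq by (simp add: wedge_flat finite_subset_idx8 sum.delta')
qed

lemma dxl_eq:
  "distinct l \<Longrightarrow> set l \<subseteq> idx8 \<Longrightarrow> dxl l K = (if K = set l then sort_sign l else 0)"
proof (induction l arbitrary: K)
  case Nil
  then show ?case
    by (simp add: dxl_def form_one_def)
next
  case (Cons i l)
  then have "dxl (i # l) K =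
      (if K \<subseteq> idx8 \<and> i \<in> K then insert_sign i (K - {i}) * (if K - {i} = set l then sort_sign l else 0)
       else 0)"
    by (simp add: dxl_def wedge_dx1)
  also have "\<dots> = (if K = set (i # l) then sort_sign (i # l) else 0)"
  proof (cases "K = insert i (set l)")
    case True
    then have "K - {i} = set l"
      using Cons.prems by auto
    then show ?thesis
      using True Cons.prems by (simp add: insert_sign_set)
  qed auto
  finally show ?case .
qed

lemma spin7_form_eq: "spin7_form K =
   (if K = {0,1,2,3} then 1 else 0) - (if K = {0,1,6,7} then 1 else 0)
 - (if K = {0,5,2,7} then - 1 else 0) - (if K = {0,5,6,3} then 1 else 0)
 + (if K = {0,4,1,5} then - 1 else 0) + (if K = {0,4,2,6} then - 1 else 0)
 + (if K = {0,4,3,7} then - 1 else 0) + (if K = {4,5,6,7} then 1 else 0)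
 - (if K = {4,5,2,3} then 1 else 0) - (if K = {4,1,6,3} then - 1 else 0)
 - (if K = {4,1,2,7} then 1 else 0) + (if K = {2,6,3,7} then - 1 else 0)
 + (if K = {1,5,3,7} then - 1 else 0) + (if K = {1,5,2,6} then - 1 else 0)"
  unfolding spin7_form_def by (simp add: dxl_eq idx8_eq split del: if_split cong: if_cong)

definition spin7_support :: "nat set set" where
  "spin7_support = {{0,1,2,3}, {0,1,6,7}, {0,5,2,7}, {0,5,6,3}, {0,4,1,5}, {0,4,2,6}, {0,4,3,7},
     {4,5,6,7}, {4,5,2,3}, {4,1,6,3}, {4,1,2,7}, {2,6,3,7}, {1,5,3,7}, {1,5,2,6}}"

lemma spin7_form_outside_support: "K \<notin> spin7_support \<Longrightarrow> spin7_form K = 0"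
  unfolding spin7_form_eq spin7_support_def by (simp split del: if_split)

lemma homogeneous_spin7_form: "homogeneous 4 spin7_form"
proof -
  have "K \<subseteq> idx8 \<and> card K = 4" if "K \<in> spin7_support" for K
    using that unfolding spin7_support_def idx8_eq by (elim insertE emptyE) simp_all
  then show ?thesis
    using spin7_form_outside_support by (auto simp: homogeneous_def)
qed

lemma sgn_pair_eq_power_sum:
  "finite A \<Longrightarrow> finite C \<Longrightarrow> sgn_pair A C = (-1) ^ (\<Sum>a\<in>A. \<Sum>c\<in>C. if c < a then 1 else 0)"
proof -
  assume "finite A" "finite C"
  have "{(i, j). i \<in> A \<and> j \<in> C \<and> j < i} = Sigma A (\<lambda>i. {j \<in> C. j < i})"
    by auto
  moreover have "card {j \<in> C. j < a} = (\<Sum>c\<in>C. if c < a then 1 else 0)" for a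
    unfolding card_eq_sum using \<open>finite C\<close> by (rule sum.inter_filter)
  ultimately show ?thesis
    using \<open>finite A\<close> \<open>finite C\<close> by (simp add: sgn_pair_def card_SigmaI)
qed

lemma subset_idx8_eq_iff: "A \<subseteq> idx8 \<Longrightarrow> B \<subseteq> idx8 \<Longrightarrow> A = B \<longleftrightarrow> (\<forall>x\<in>idx8. x \<in> A \<longleftrightarrow> x \<in> B)"
  by blast

lemma hodge_spin7_form_on_support: "J \<in> spin7_support \<Longrightarrow> hodge spin7_form J = spin7_form J"
  unfolding spin7_support_def
  by (elim insertE emptyE; simp only:; simp add: hodge_def spin7_form_eq idx8_eq subset_idx8_eq_iff
      sgn_pair_eq_power_sum insert_Diff_if split del: if_split)

lemma compl_spin7_support: "S \<in> spin7_support \<Longrightarrow> idx8 - S \<in> spin7_support"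
  unfolding spin7_support_def
  by (elim insertE emptyE; simp only:; simp add: idx8_eq subset_idx8_eq_iff insert_Diff_if)

lemma hodge_spin7_form: "hodge spin7_form = spin7_form"
proof
  fix J
  show "hodge spin7_form J = spin7_form J"
  proof (cases "J \<in> spin7_support")
    case False
    then have "idx8 - J \<notin> spin7_support" if "J \<subseteq> idx8"
      using compl_spin7_support[of "idx8 - J"] that by (auto simp: double_diff)
    then show ?thesis
      using False by (simp add: hodge_def spin7_form_outside_support)
  qed (rule hodge_spin7_form_on_support)
qed

section \<open>The norm of \<open>v \<and> w\<close>\<close>

definition form_inner :: "form \<Rightarrow> form \<Rightarrow> real" where
  "form_inner \<alpha> \<beta> = (\<Sum>I\<in>Pow idx8. \<alpha> I * \<beta> I)"

lemma form_inner_commute: "form_inner \<alpha> \<beta> = form_inner \<beta> \<alpha>"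
  by (simp add: form_inner_def mult.commute)

lemma form_inner_right_simps:
  "form_inner \<alpha> (\<beta> - \<gamma>) = form_inner \<alpha> \<beta> - form_inner \<alpha> \<gamma>"
  "form_inner \<alpha> (const_form c * \<beta>) = c * form_inner \<alpha> \<beta>"
  "form_inner \<alpha> (restrict_idx8 \<beta>) = form_inner \<alpha> \<beta>"
  by (auto simp: form_inner_def sum_subtractf right_diff_distrib sum_distrib_left restrict_idx8_def
      mult_ac intro!: sum.cong)

lemma form_inner_wedge_flat: "form_inner (wedge (flat v) \<alpha>) \<beta> = form_inner \<alpha> (interior v \<beta>)"
proof -
  have "form_inner (wedge (flat v) \<alpha>) \<beta>
      = (\<Sum>K\<in>Pow idx8. \<Sum>i\<in>K. v i * insert_sign i (K - {i}) * \<alpha> (K - {i}) * \<beta> K)"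
    unfolding form_inner_def by (rule sum.cong[OF refl]) (auto simp: wedge_flat sum_distrib_right)
  also have "\<dots> = (\<Sum>(K, i)\<in>Sigma (Pow idx8) (\<lambda>K. K). v i * insert_sign i (K - {i}) * \<alpha> (K - {i}) * \<beta> K)"
    by (rule sum.Sigma) (auto simp: finite_subset_idx8)
  also have "\<dots> = (\<Sum>(J, j)\<in>Sigma (Pow idx8) (\<lambda>J. idx8 - J). v j * insert_sign j J * \<alpha> J * \<beta> (insert j J))"
    by (rule sum.reindex_bij_witness[where i = "\<lambda>(J, j). (insert j J, j)" and j = "\<lambda>(K, i). (K - {i}, i)"])
      (auto simp: insert_absorb)
  also have "\<dots> = (\<Sum>J\<in>Pow idx8. \<Sum>j\<in>idx8 - J. v j * insert_sign j J * \<alpha> J * \<beta> (insert j J))"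
    by (rule sum.Sigma[symmetric]) auto
  also have "\<dots> = form_inner \<alpha> (interior v \<beta>)"
    unfolding form_inner_def
    by (rule sum.cong[OF refl]) (auto simp: interior_eq sum_distrib_left mult_ac)
  finally show ?thesis .
qed

lemma form_inner_wedge_flat_self:
  "form_inner (wedge (flat v) \<beta>) (wedge (flat v) \<beta>)
     = inner8 v v * form_inner \<beta> \<beta> - form_inner (interior v \<beta>) (interior v \<beta>)"
proof -
  have "form_inner (wedge (flat v) \<beta>) (wedge (flat v) \<beta>) = form_inner \<beta> (interior v (wedge (flat v) \<beta>))"
    by (rule form_inner_wedge_flat)
  also have "\<dots> = inner8 v v * form_inner \<beta> \<beta> - form_inner \<beta> (wedge (flat v) (interior v \<beta>))"
    by (simp add: interior_wedge_flat form_inner_right_simps)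
  also have "form_inner \<beta> (wedge (flat v) (interior v \<beta>)) = form_inner (interior v \<beta>) (interior v \<beta>)"
    by (simp add: form_inner_commute[of \<beta>] form_inner_wedge_flat)
  finally show ?thesis .
qed

lemma form_inner_flat: "form_inner (flat v) (flat w) = inner8 v w"
proof -
  have "form_inner (flat v) (flat w) = (\<Sum>K\<in>(\<lambda>i. {i}) ` idx8. flat v K * flat w K)"
    unfolding form_inner_def
    by (rule sum.mono_neutral_right) (auto intro!: flat_non_singleton)
  also have "\<dots> = inner8 v w"
    by (simp add: sum.reindex inner8_def flat_singleton)
  finally show ?thesis .
qed

lemma interior_flat: "interior v (flat w) = const_form (inner8 v w) * form_one"
proof
  fix I
  have "flat w (insert j I) = 0" if "I \<noteq> {}" "j \<notin> I" for j
    using that by (intro flat_non_singleton) auto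
  then show "interior v (flat w) I = (const_form (inner8 v w) * form_one) I"
    by (auto simp: interior_eq form_one_def inner8_def insert_sign_def flat_singleton intro!: sum.cong)
qed

lemma biv_norm_squared: "(biv_norm v w)\<^sup>2 = inner8 v v * inner8 w w - (inner8 v w)\<^sup>2"
proof -
  have "(biv_norm v w)\<^sup>2 = form_inner (wedge (flat v) (flat w)) (wedge (flat v) (flat w))"
    by (simp add: biv_norm_def form_norm_def form_inner_def power2_eq_square sum_nonneg)
  also have "\<dots> = inner8 v v * inner8 w w - form_inner (interior v (flat w)) (interior v (flat w))"
    by (simp add: form_inner_wedge_flat_self form_inner_flat)
  also have "form_inner (interior v (flat w)) (interior v (flat w)) = (inner8 v w)\<^sup>2"
    by (simp add: interior_flat form_inner_def form_one_def power2_eq_square if_distrib sum.delta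
        cong: if_cong)
  finally show ?thesis .
qed

lemma biv_norm_nonneg: "0 \<le> biv_norm v w"
  by (simp add: biv_norm_def form_norm_def sum_nonneg)

section \<open>Uniqueness of solutions\<close>

lemma gronwall_zero_forward:
  fixes E E' :: "real \<Rightarrow> real"
  assumes deriv: "\<And>s. (E has_real_derivative E' s) (at s)"
    and growth: "\<And>s. E' s \<le> K * E s"
    and initial: "E 0 = 0" and nonneg: "\<And>s. 0 \<le> E s" and "0 \<le> t"
  shows "E t = 0"
proof -
  define g where "g s = E s * exp (- K * s)" for s
  have "g t \<le> g 0"
  proof (rule DERIV_nonpos_imp_nonincreasing[OF \<open>0 \<le> t\<close>])
    fix x
    have "(g has_real_derivative (E' x - K * E x) * exp (- K * x)) (at x)"
      unfolding g_def by (auto intro!: derivative_eq_intros deriv simp: algebra_simps)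
    moreover have "(E' x - K * E x) * exp (- K * x) \<le> 0"
      using growth[of x] by (simp add: mult_nonpos_nonneg)
    ultimately show "\<exists>y. (g has_real_derivative y) (at x) \<and> y \<le> 0"
      by blast
  qed
  then have "E t \<le> 0"
    using initial by (simp add: g_def mult_le_0_iff)
  with nonneg[of t] show ?thesis
    by simp
qed

lemma gronwall_zero:
  fixes E E' :: "real \<Rightarrow> real"
  assumes deriv: "\<And>s. (E has_real_derivative E' s) (at s)"
    and growth: "\<And>s. \<bar>E' s\<bar> \<le> K * E s"
    and initial: "E 0 = 0" and nonneg: "\<And>s. 0 \<le> E s"
  shows "E t = 0"
proof (cases "0 \<le> t")
  case True
  show ?thesis
    by (rule gronwall_zero_forward[OF deriv _ initial nonneg True]) (use growth abs_le_D1 in blast)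
next
  case False
  have "(\<lambda>s. E (- s)) (- t) = 0"
  proof (rule gronwall_zero_forward[where E = "\<lambda>s. E (- s)" and E' = "\<lambda>s. - E' (- s)" and K = K])
    show "((\<lambda>s. E (- s)) has_real_derivative - E' (- s)) (at s)" for s
      using deriv[of "- s"] by (simp add: DERIV_mirror)
    show "- E' (- s) \<le> K * E (- s)" for s
      using growth[of "- s"] by linarith
  qed (use initial nonneg False in auto)
  then show ?thesis
    by simp
qed

lemma sum_abs_squared_le: "(\<Sum>i\<in>A. \<bar>f i\<bar>)\<^sup>2 \<le> real (card A) * (\<Sum>i\<in>A. (f i)\<^sup>2)"
  for f :: "'a \<Rightarrow> real"
proof -
  have "(\<Sum>i\<in>A. \<bar>f i\<bar>)\<^sup>2 = (\<Sum>i\<in>A. \<Sum>j\<in>A. \<bar>f i\<bar> * \<bar>f j\<bar>)"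
    by (simp add: power2_eq_square sum_product)
  also have "\<dots> \<le> (\<Sum>i\<in>A. \<Sum>j\<in>A. ((f i)\<^sup>2 + (f j)\<^sup>2) / 2)"
  proof (intro sum_mono)
    fix i j
    show "\<bar>f i\<bar> * \<bar>f j\<bar> \<le> ((f i)\<^sup>2 + (f j)\<^sup>2) / 2"
      using sum_squares_bound[of "\<bar>f i\<bar>" "\<bar>f j\<bar>"] by simp
  qed
  also have "\<dots> = real (card A) * (\<Sum>i\<in>A. (f i)\<^sup>2)"
    by (simp add: sum.distrib add_divide_distrib sum_distrib_left[symmetric] flip: sum_divide_distrib)
  finally show ?thesis .
qed

lemma linear_system_zero_solution:
  fixes x :: "real \<Rightarrow> 'a \<Rightarrow> real" and L :: "('a \<Rightarrow> real) \<Rightarrow> 'a \<Rightarrow> real"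
  assumes "finite A"
    and bounded: "\<And>y i. i \<in> A \<Longrightarrow> \<bar>L y i\<bar> \<le> C * (\<Sum>j\<in>A. \<bar>y j\<bar>)"
    and outside: "\<And>y i. i \<notin> A \<Longrightarrow> L y i = 0"
    and deriv: "\<And>t i. ((\<lambda>s. x s i) has_real_derivative L (x t) i) (at t)"
    and initial: "x 0 = 0"
  shows "x t = 0"
proof
  fix i
  show "x t i = 0 i"
  proof (cases "i \<in> A")
    case False
    then have "((\<lambda>s. x s i) has_real_derivative 0) (at s)" for s
      using deriv[where t = s and i = i] by (simp add: outside)
    then have "x t i = x 0 i"
      by (intro DERIV_isconst_all allI)
    with initial show ?thesis
      by simp
  next
    case True
    define N where "N s = (\<Sum>j\<in>A. \<bar>x s j\<bar>)" for s
    define E where "E s = (\<Sum>j\<in>A. (x s j)\<^sup>2)" for s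
    define E' where "E' s = (\<Sum>j\<in>A. 2 * x s j * L (x s) j)" for s
    have "(E has_real_derivative E' s) (at s)" for s
      unfolding E_def[abs_def] E'_def by (auto intro!: DERIV_sum derivative_eq_intros deriv)
    moreover have "\<bar>E' s\<bar> \<le> (2 * \<bar>C\<bar> * card A) * E s" for s
    proof -
      have "C * N s \<le> \<bar>C\<bar> * N s"
        by (rule mult_right_mono) (simp_all add: N_def sum_nonneg)
      then have "\<bar>L (x s) j\<bar> \<le> \<bar>C\<bar> * N s" if "j \<in> A" for j
        using bounded[OF that, of "x s"] by (simp add: N_def)
      then have "\<bar>E' s\<bar> \<le> (\<Sum>j\<in>A. 2 * \<bar>x s j\<bar> * (\<bar>C\<bar> * N s))"
        unfolding E'_def by (intro order.trans[OF sum_abs] sum_mono) (simp add: abs_mult mult_left_mono)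
      also have "\<dots> = 2 * \<bar>C\<bar> * (N s)\<^sup>2"
        by (simp add: N_def power2_eq_square sum_distrib_left sum_distrib_right mult_ac)
      also have "\<dots> \<le> 2 * \<bar>C\<bar> * (card A * E s)"
        using sum_abs_squared_le[of "x s" A] by (simp add: N_def E_def mult_left_mono)
      finally show ?thesis
        by (simp add: mult_ac)
    qed
    moreover have "E 0 = 0" "0 \<le> E s" for s
      using initial by (simp_all add: E_def sum_nonneg)
    ultimately have "E t = 0"
      by (rule gronwall_zero)
    then show ?thesis
      using True \<open>finite A\<close> by (simp add: E_def sum_nonneg_eq_0_iff)
  qed
qed

definition coeff_norm :: "form \<Rightarrow> real" where
  "coeff_norm \<alpha> = (\<Sum>I\<in>Pow idx8. \<bar>\<alpha> I\<bar>)"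

lemma coeff_norm_nonneg: "0 \<le> coeff_norm \<alpha>"
  by (simp add: coeff_norm_def sum_nonneg)

lemma abs_le_coeff_norm: "J \<subseteq> idx8 \<Longrightarrow> \<bar>\<alpha> J\<bar> \<le> coeff_norm \<alpha>"
  unfolding coeff_norm_def by (rule member_le_sum) auto

lemma coeff_norm_le: "(\<And>I. \<bar>\<beta> I\<bar> \<le> c) \<Longrightarrow> coeff_norm \<beta> \<le> 256 * c"
  using sum_bounded_above[of "Pow idx8" "\<lambda>I. \<bar>\<beta> I\<bar>" c] by (simp add: coeff_norm_def card_Pow)

lemma abs_interior_le: "\<bar>interior v \<alpha> I\<bar> \<le> (\<Sum>j\<in>idx8. \<bar>v j\<bar>) * coeff_norm \<alpha>"
proof (cases "I \<subseteq> idx8")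
  case True
  have "\<bar>interior v \<alpha> I\<bar> \<le> (\<Sum>j\<in>idx8 - I. \<bar>v j * insert_sign j I * \<alpha> (insert j I)\<bar>)"
    using True by (simp add: interior_eq sum_abs)
  also have "\<dots> \<le> (\<Sum>j\<in>idx8 - I. \<bar>v j\<bar> * coeff_norm \<alpha>)"
  proof (rule sum_mono)
    show "\<bar>v j * insert_sign j I * \<alpha> (insert j I)\<bar> \<le> \<bar>v j\<bar> * coeff_norm \<alpha>" if "j \<in> idx8 - I" for j
      using abs_le_coeff_norm[of "insert j I" \<alpha>] that True by (simp add: abs_mult mult_left_mono)
  qed
  also have "\<dots> \<le> (\<Sum>j\<in>idx8. \<bar>v j\<bar> * coeff_norm \<alpha>)"
    by (rule sum_mono2) (simp_all add: coeff_norm_nonneg)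
  finally show ?thesis
    by (simp add: sum_distrib_right)
qed (simp add: interior_eq coeff_norm_nonneg sum_nonneg)

lemma abs_hodge_le: "\<bar>hodge \<alpha> J\<bar> \<le> coeff_norm \<alpha>"
proof (cases "J \<subseteq> idx8")
  case True
  have "\<bar>sgn_pair (idx8 - J) J\<bar> = 1"
    by (simp add: sgn_pair_def)
  then show ?thesis
    using abs_le_coeff_norm[of "idx8 - J" \<alpha>] True by (simp add: hodge_def abs_mult)
qed (simp add: hodge_def coeff_norm_nonneg)

lemma coeff_norm_hodge_interior:
  "coeff_norm (hodge (interior v \<alpha>)) \<le> 65536 * (\<Sum>j\<in>idx8. \<bar>v j\<bar>) * coeff_norm \<alpha>"
proof -
  have "coeff_norm (hodge (interior v \<alpha>)) \<le> 256 * coeff_norm (interior v \<alpha>)"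
    by (intro coeff_norm_le abs_hodge_le)
  also have "coeff_norm (interior v \<alpha>) \<le> 256 * ((\<Sum>j\<in>idx8. \<bar>v j\<bar>) * coeff_norm \<alpha>)"
    by (intro coeff_norm_le abs_interior_le)
  finally show ?thesis
    by simp
qed

lemma flow_rhs_bounded: "\<exists>C. \<forall>\<alpha> J. \<bar>flow_rhs v w \<alpha> J\<bar> \<le> C * coeff_norm \<alpha>"
proof -
  let ?V = "\<Sum>j\<in>idx8. \<bar>v j\<bar>" and ?W = "\<Sum>j\<in>idx8. \<bar>w j\<bar>"
  have bound: "\<bar>interior u (hodge (interior u' \<alpha>)) J\<bar>
      \<le> (\<Sum>j\<in>idx8. \<bar>u j\<bar>) * (65536 * (\<Sum>j\<in>idx8. \<bar>u' j\<bar>) * coeff_norm \<alpha>)" for u u' \<alpha> J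
    by (rule order.trans[OF abs_interior_le mult_left_mono[OF coeff_norm_hodge_interior]])
      (simp add: sum_nonneg)
  have "\<bar>flow_rhs v w \<alpha> J\<bar> \<le> (2 * 65536 * ?V * ?W) * coeff_norm \<alpha>" for \<alpha> J
  proof -
    have "\<bar>flow_rhs v w \<alpha> J\<bar>
        \<le> \<bar>interior w (hodge (interior v \<alpha>)) J\<bar> + \<bar>interior v (hodge (interior w \<alpha>)) J\<bar>"
      by (simp add: flow_rhs_def form_diff_def abs_triangle_ineq4)
    also have "\<dots> \<le> ?W * (65536 * ?V * coeff_norm \<alpha>) + ?V * (65536 * ?W * coeff_norm \<alpha>)"
      by (intro add_mono bound)
    finally show ?thesis
      by (simp add: algebra_simps)
  qed
  then show ?thesis
    by blast
qed

lemma flow_rhs_linear: "form_linear (flow_rhs v w)"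
  unfolding form_linear_def flow_rhs_def form_ops
  by (simp add: exterior_linear_simps right_diff_distrib add_diff_add)

lemma flow_rhs_solution_unique:
  assumes "\<And>t I. ((\<lambda>s. \<Psi> s I) has_real_derivative flow_rhs v w (\<Psi> t) I) (at t)"
    and "\<And>t I. ((\<lambda>s. \<Phi> s I) has_real_derivative flow_rhs v w (\<Phi> t) I) (at t)"
    and "\<Psi> 0 = \<Phi> 0"
  shows "\<Psi> = \<Phi>"
proof -
  obtain C where C: "\<And>\<alpha> J. \<bar>flow_rhs v w \<alpha> J\<bar> \<le> C * coeff_norm \<alpha>"
    using flow_rhs_bounded by blast
  have "(\<lambda>t. \<Psi> t - \<Phi> t) t = 0" for t
  proof (rule linear_system_zero_solution[where A = "Pow idx8" and L = "flow_rhs v w" and C = C])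
    show "((\<lambda>s. (\<Psi> s - \<Phi> s) I) has_real_derivative flow_rhs v w (\<Psi> t - \<Phi> t) I) (at t)" for t I
      using DERIV_diff[OF assms(1,2)] by (simp add: form_linear_simps[OF flow_rhs_linear])
    show "flow_rhs v w y I = 0" if "I \<notin> Pow idx8" for y I
      using that by (simp add: flow_rhs_def form_diff_def interior_eq)
  qed (use C assms(3) in \<open>simp_all add: coeff_norm_def fun_eq_iff\<close>)
  then show ?thesis
    by (simp add: fun_eq_iff)
qed

section \<open>The explicit solution\<close>

definition flow_curve :: "(nat \<Rightarrow> real) \<Rightarrow> (nat \<Rightarrow> real) \<Rightarrow> form \<Rightarrow> real \<Rightarrow> form" where
  "flow_curve v w \<alpha> t = \<alpha>
     + const_form ((1 - cos (biv_norm v w * t)) / (biv_norm v w)\<^sup>2) * opB v w (opB v w \<alpha>)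
     + const_form (sin (biv_norm v w * t) / biv_norm v w) * opB v w \<alpha>"

lemma self_dual_opB:
  assumes "homogeneous 4 \<alpha>" and "hodge \<alpha> = \<alpha>"
  shows "homogeneous 4 (opB v w \<alpha>)" and "hodge (opB v w \<alpha>) = opB v w \<alpha>"
  using assms homogeneous_opB[of 3 \<alpha>] hodge_opB by (simp_all add: numeral_eq_Suc)

lemma flow_rhs_flow_curve:
  assumes "homogeneous 4 \<alpha>" and "hodge \<alpha> = \<alpha>" and "biv_norm v w \<noteq> 0"
  shows "flow_rhs v w (flow_curve v w \<alpha> t) = const_form (cos (biv_norm v w * t)) * opB v w \<alpha>
     + const_form (sin (biv_norm v w * t) / biv_norm v w) * opB v w (opB v w \<alpha>)"
proof -
  let ?l = "biv_norm v w"
  have "flow_rhs v w (opB v w (opB v w \<alpha>)) = opB v w (opB v w (opB v w \<alpha>))"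
    using assms by (simp add: flow_rhs_degree4 self_dual_opB)
  also have "\<dots> = - const_form (?l\<^sup>2) * opB v w \<alpha>"
    by (simp add: opB_cube biv_norm_squared)
  finally have cube: "flow_rhs v w (opB v w (opB v w \<alpha>)) = - const_form (?l\<^sup>2) * opB v w \<alpha>" .
  show ?thesis
    using assms
    by (simp add: flow_curve_def form_linear_simps[OF flow_rhs_linear] cube flow_rhs_degree4
        self_dual_opB) (simp add: fun_eq_iff field_simps)
qed

lemma flow_curve_has_derivative:
  assumes "homogeneous 4 \<alpha>" and "hodge \<alpha> = \<alpha>" and "biv_norm v w \<noteq> 0"
  shows "((\<lambda>s. flow_curve v w \<alpha> s I) has_real_derivative flow_rhs v w (flow_curve v w \<alpha> t) I) (at t)"
proof -
  let ?l = "biv_norm v w"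
  have "((\<lambda>s. flow_curve v w \<alpha> s I) has_real_derivative
      sin (?l * t) / ?l * opB v w (opB v w \<alpha>) I + cos (?l * t) * opB v w \<alpha> I) (at t)"
    unfolding flow_curve_def using assms(3)
    by (auto intro!: derivative_eq_intros simp: field_simps power2_eq_square)
  then show ?thesis
    using assms by (simp add: flow_rhs_flow_curve add.commute)
qed

lemma flow_curve_periodic:
  assumes "biv_norm v w \<noteq> 0"
  shows "flow_curve v w \<alpha> (t + 2 * pi / biv_norm v w) = flow_curve v w \<alpha> t"
proof -
  have "biv_norm v w * (t + 2 * pi / biv_norm v w) = biv_norm v w * t + 2 * pi"
    using assms by (simp add: field_simps)
  then show ?thesis
    by (simp add: flow_curve_def sin_add cos_add)
qed

theorem mainTheorem12:
  fixes v w :: "nat \<Rightarrow> real" and \<Phi> :: "real \<Rightarrow> form"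
  defines "\<Phi> \<equiv> (\<lambda>t. form_add spin7_form
              (form_add (form_scale ((1 - cos (biv_norm v w * t)) / (biv_norm v w)\<^sup>2)
                                    (opB v w (opB v w spin7_form)))
                        (form_scale (sin (biv_norm v w * t) / biv_norm v w)
                                    (opB v w spin7_form))))"
  assumes "biv_norm v w \<noteq> 0"
  shows "\<Phi> 0 = spin7_form
     \<and> (\<forall>t I. ((\<lambda>s. \<Phi> s I) has_real_derivative flow_rhs v w (\<Phi> t) I) (at t))
     \<and> (\<forall>\<Psi> :: real \<Rightarrow> form. \<Psi> 0 = spin7_form
          \<and> (\<forall>t I. ((\<lambda>s. \<Psi> s I) has_real_derivative flow_rhs v w (\<Psi> t) I) (at t))
          \<longrightarrow> \<Psi> = \<Phi>)
     \<and> (\<exists>T>0. \<forall>t. \<Phi> (t + T) = \<Phi> t)"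
proof -
  have \<Phi>_eq: "\<Phi> = flow_curve v w spin7_form"
    by (simp add: \<Phi>_def flow_curve_def form_ops add.assoc fun_eq_iff)
  have solution: "((\<lambda>s. \<Phi> s I) has_real_derivative flow_rhs v w (\<Phi> t) I) (at t)" for t I
    unfolding \<Phi>_eq using homogeneous_spin7_form hodge_spin7_form assms(2)
    by (rule flow_curve_has_derivative)
  have "0 < 2 * pi / biv_norm v w"
    using assms(2) biv_norm_nonneg[of v w] by simp
  moreover have "\<Phi> (t + 2 * pi / biv_norm v w) = \<Phi> t" for t
    unfolding \<Phi>_eq using assms(2) by (rule flow_curve_periodic)
  moreover have "\<Phi> 0 = spin7_form"
    by (simp add: \<Phi>_eq flow_curve_def fun_eq_iff)
  ultimately show ?thesis
    using solution flow_rhs_solution_unique[of _ v w \<Phi>] by metis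
qed

end
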